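(* Let $D$ be a finite subset of $\mathbb{N}^d\setminus\{0\}$ that is an antichain with respect to the natural partial order. Consider the collection $\mathcal{C}_D$ of all GNS $S\subseteq\mathbb{N}^d$ with $D\subseteq\mathcal{H}(S)$, ordered by inclusion. Then the maximal members of $\mathcal{C}_D$ are exactly the quasi-irreducible GNS $S$ with $FA(S)=D$.
   Context: $\mathbb{N}=\{0,1,2,\dots\}$. A GNS is a submonoid $S\subseteq\mathbb{N}^d$ with finite complement $\mathcal{H}(S)=\mathbb{N}^d\setminus S$ (gaps). Natural partial order: $x\le y$ iff $x^{(i)}\le y^{(i)}$ for all $i$. A relaxed monomial order is a total order $\prec$ on $\mathbb{N}^d$ with (i) $v\prec w\Rightarrow v\prec w+u$ for all $u\in\mathbb{N}^d$, (ii) $0\prec v$ for all $v\neq0$. A gap is Frobenius allowable if it equals $\max_\prec\mathcal{H}(S)$ for some relaxed monomial order $\prec$; $FA(S)$ is the set of Frobenius allowable gaps. A GNS $S$ is quasi-irreducible if for every $x\in\mathcal{H}(S)$, either $2x\in FA(S)$ or there is $F\in FA(S)$ with $F-x\in S$ (in particular $F-x\in\mathbb{N}^d$). *)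

theory Defs
  imports Main
begin

text \<open>Points of N^d are functions 'd \<Rightarrow> nat for a finite index type 'd (d = CARD('d)).
  The natural partial order is the pointwise order (le_fun in Main).\<close>

definition vadd :: "('d \<Rightarrow> nat) \<Rightarrow> ('d \<Rightarrow> nat) \<Rightarrow> ('d \<Rightarrow> nat)" where
  "vadd x y = (\<lambda>i. x i + y i)"

definition vsub :: "('d \<Rightarrow> nat) \<Rightarrow> ('d \<Rightarrow> nat) \<Rightarrow> ('d \<Rightarrow> nat)" where
  "vsub x y = (\<lambda>i. x i - y i)"

definition vzero :: "'d \<Rightarrow> nat" where
  "vzero = (\<lambda>i. 0)"

definition gaps :: "('d \<Rightarrow> nat) set \<Rightarrow> ('d \<Rightarrow> nat) set" where
  "gaps S = UNIV - S"

definition GNS :: "('d::finite \<Rightarrow> nat) set \<Rightarrow> bool" where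
  "GNS S \<longleftrightarrow> vzero \<in> S \<and> (\<forall>x\<in>S. \<forall>y\<in>S. vadd x y \<in> S) \<and> finite (gaps S)"

text \<open>A relaxed monomial order, given as its strict part R (R v w means v \<prec> w).\<close>
definition relaxed_monomial_order :: "(('d \<Rightarrow> nat) \<Rightarrow> ('d \<Rightarrow> nat) \<Rightarrow> bool) \<Rightarrow> bool" where
  "relaxed_monomial_order R \<longleftrightarrow>
     (\<forall>v. \<not> R v v) \<and>
     (\<forall>u v w. R u v \<longrightarrow> R v w \<longrightarrow> R u w) \<and>
     (\<forall>v w. v \<noteq> w \<longrightarrow> R v w \<or> R w v) \<and>
     (\<forall>u v w. R v w \<longrightarrow> R v (vadd w u)) \<and>
     (\<forall>v. v \<noteq> vzero \<longrightarrow> R vzero v)"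

definition FA :: "('d::finite \<Rightarrow> nat) set \<Rightarrow> ('d \<Rightarrow> nat) set" where
  "FA S = {F \<in> gaps S. \<exists>R. relaxed_monomial_order R \<and> (\<forall>h\<in>gaps S. h \<noteq> F \<longrightarrow> R h F)}"

definition quasi_irreducible :: "('d::finite \<Rightarrow> nat) set \<Rightarrow> bool" where
  "quasi_irreducible S \<longleftrightarrow>
     (\<forall>x\<in>gaps S. vadd x x \<in> FA S \<or> (\<exists>F\<in>FA S. x \<le> F \<and> vsub F x \<in> S))"

definition antichain :: "('d \<Rightarrow> nat) set \<Rightarrow> bool" where
  "antichain D \<longleftrightarrow> (\<forall>a\<in>D. \<forall>b\<in>D. a \<le> b \<longrightarrow> a = b)"

definition CD :: "('d::finite \<Rightarrow> nat) set \<Rightarrow> ('d \<Rightarrow> nat) set set" where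
  "CD D = {S. GNS S \<and> D \<subseteq> gaps S}"

definition maximal_in :: "'a set \<Rightarrow> 'a set set \<Rightarrow> bool" where
  "maximal_in S C \<longleftrightarrow> S \<in> C \<and> (\<forall>T\<in>C. S \<subseteq> T \<longrightarrow> T = S)"

end

theory Submission
  imports Defs "HOL-Library.Function_Algebras" "HOL-Library.Product_Lexorder"
begin

(*
  FA(S) is the set of maximal gaps of S for the natural partial order: a relaxed monomial
  order extends the strict natural order, so its largest gap is maximal; conversely, ordering
  first by whether F \<le> v and then by total degree makes a given maximal gap F the largest one.

  A special gap h of S (h + s \<in> S for all nonzero s \<in> S, and 2h \<in> S) can be adjoined to S.
  So if S is maximal among the GNS avoiding D, all its special gaps lie in D. Maximal gaps are
  special, whence FA(S) \<subseteq> D, and D \<subseteq> FA(S) because D is an antichain. If S were not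
  quasi-irreducible, a maximal gap h violating the condition would be special (the antichain
  property kills every candidate witness above h), hence h \<in> D, and then h itself witnesses
  the condition. Conversely, for a quasi-irreducible S any element x added to S brings 2x or
  some F \<in> FA(S) along.
*)

lemma vadd_eq_plus: "vadd = (+)"
  by (simp add: vadd_def fun_eq_iff)

lemma vsub_eq_minus: "vsub = (-)"
  by (simp add: vsub_def fun_eq_iff)

lemma vzero_eq_zero: "vzero = 0"
  by (simp add: vzero_def fun_eq_iff)

lemmas vector_ops_eq = vadd_eq_plus vsub_eq_minus vzero_eq_zero

lemma le_add_fun: "(x :: 'a \<Rightarrow> nat) \<le> x + u"
  by (simp add: le_fun_def)

lemma less_add_fun: "u \<noteq> 0 \<Longrightarrow> (x :: 'a \<Rightarrow> nat) < x + u"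
  by (auto simp: less_le le_add_fun)

lemma add_diff_cancel_fun: "x \<le> (y :: 'a \<Rightarrow> nat) \<Longrightarrow> x + (y - x) = y"
  by (simp add: le_fun_def fun_eq_iff)

lemma add_self_eq_0_fun: "(x :: 'a \<Rightarrow> nat) + x = 0 \<longleftrightarrow> x = 0"
  by (simp add: fun_eq_iff)

lemma sum_less_sum_fun:
  fixes v w :: "'a::finite \<Rightarrow> nat"
  assumes "v < w"
  shows "sum v UNIV < sum w UNIV"
proof -
  from assms obtain a where "v a < w a"
    by (auto simp: less_fun_def le_fun_def not_le)
  with assms show ?thesis
    by (intro sum_strict_mono_ex1) (auto simp: less_fun_def le_fun_def)
qed

definition strict_total_order :: "('a \<Rightarrow> 'a \<Rightarrow> bool) \<Rightarrow> bool" where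
  "strict_total_order R \<longleftrightarrow>
     (\<forall>v. \<not> R v v) \<and> (\<forall>u v w. R u v \<longrightarrow> R v w \<longrightarrow> R u w) \<and> (\<forall>v w. v \<noteq> w \<longrightarrow> R v w \<or> R w v)"

lemma strict_total_orderD:
  assumes "strict_total_order R"
  shows "\<not> R v v" and "R u v \<Longrightarrow> R v w \<Longrightarrow> R u w" and "v \<noteq> w \<Longrightarrow> R v w \<or> R w v"
  using assms unfolding strict_total_order_def by blast+

lemma relaxed_monomial_order_iff:
  "relaxed_monomial_order R \<longleftrightarrow> strict_total_order R \<and> (\<forall>v w. v < w \<longrightarrow> R v w)"
proof
  assume R: "relaxed_monomial_order R"
  then have irrefl: "\<And>v. \<not> R v v" and total: "\<And>v w. v \<noteq> w \<Longrightarrow> R v w \<or> R w v"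
    and mono: "\<And>u v w. R v w \<Longrightarrow> R v (w + u)"
    unfolding relaxed_monomial_order_def vector_ops_eq by blast+
  have "R v w" if "v < w" for v w
  proof (rule ccontr)
    assume "\<not> R v w"
    with total[of v w] \<open>v < w\<close> have "R w v"
      by (auto simp: less_fun_def)
    then have "R w (v + (w - v))"
      by (rule mono)
    then have "R w w"
      using \<open>v < w\<close> add_diff_cancel_fun[of v w] by (simp add: less_imp_le)
    with irrefl show False
      by blast
  qed
  moreover have "strict_total_order R"
    using R unfolding relaxed_monomial_order_def strict_total_order_def by (elim conjE) (intro conjI)
  ultimately show "strict_total_order R \<and> (\<forall>v w. v < w \<longrightarrow> R v w)"
    by blast
next
  assume R: "strict_total_order R \<and> (\<forall>v w. v < w \<longrightarrow> R v w)"
  then have trans: "\<And>u v w. R u v \<Longrightarrow> R v w \<Longrightarrow> R u w" and extends: "\<And>v w. v < w \<Longrightarrow> R v w"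
    unfolding strict_total_order_def by blast+
  have "R v (w + u)" if "R v w" for u v w
  proof (cases "u = 0")
    case False
    then show ?thesis
      using trans[OF that extends[OF less_add_fun]] by blast
  qed (simp add: that)
  moreover have "R 0 v" if "v \<noteq> 0" for v :: "'a \<Rightarrow> nat"
    using that by (intro extends) (simp add: less_le le_fun_def)
  ultimately show "relaxed_monomial_order R"
    using R unfolding relaxed_monomial_order_def strict_total_order_def vector_ops_eq
    by (elim conjE) (intro conjI; blast)
qed

lemma strict_total_order_refining_key:
  fixes f :: "'a \<Rightarrow> 'b::linorder"
  obtains R where "strict_total_order R" and "\<And>v w. f v < f w \<Longrightarrow> R v w"
proof -
  from well_ordering obtain r :: "'a rel" where "Well_order r" "Field r = UNIV"
    by (elim exE conjE)
  then have "trans r" "antisym r" "total r"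
    by (simp_all add: well_order_on_def linear_order_on_def partial_order_on_def preorder_on_def)
  define R where "R v w \<longleftrightarrow> f v < f w \<or> (f v = f w \<and> (v, w) \<in> r \<and> v \<noteq> w)" for v w
  have "strict_total_order R"
    unfolding strict_total_order_def
  proof (intro conjI allI impI)
    show "\<not> R v v" for v
      by (simp add: R_def)
    show "R u w" if "R u v" "R v w" for u v w
    proof (cases "f u < f v \<or> f v < f w")
      case True
      moreover have "f u \<le> f v" "f v \<le> f w"
        using that unfolding R_def by auto
      ultimately have "f u < f w"
        by auto
      then show ?thesis
        by (simp add: R_def)
    next
      case False
      then have "(u, v) \<in> r" "(v, w) \<in> r" "u \<noteq> v" "v \<noteq> w" "f u = f w"
        using that unfolding R_def by auto
      with \<open>trans r\<close> \<open>antisym r\<close> show ?thesis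
        unfolding R_def by (meson antisymD transD)
    qed
    show "R v w \<or> R w v" if "v \<noteq> w" for v w
    proof -
      have "(v, w) \<in> r \<or> (w, v) \<in> r"
        using that \<open>total r\<close> by (simp add: total_on_def)
      with that show ?thesis
        unfolding R_def by (meson linorder_neqE)
    qed
  qed
  then show ?thesis
    by (rule that) (simp add: R_def)
qed

lemma relaxed_monomial_order_with_top:
  fixes F :: "'d::finite \<Rightarrow> nat"
  obtains R where "relaxed_monomial_order R" and "\<And>h. \<not> F \<le> h \<Longrightarrow> R h F"
proof -
  obtain R where R: "strict_total_order R"
      and key: "\<And>v w. (F \<le> v, sum v UNIV) < (F \<le> w, sum w UNIV) \<Longrightarrow> R v w"
    using strict_total_order_refining_key[of "\<lambda>v. (F \<le> v, sum v UNIV)"] by metis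
  have "R v w" if "v < w" for v w
  proof (rule key)
    have "F \<le> v \<longrightarrow> F \<le> w"
      using order.trans less_imp_le[OF \<open>v < w\<close>] by blast
    with sum_less_sum_fun[OF \<open>v < w\<close>]
    show "(F \<le> v, sum v UNIV) < (F \<le> w, sum w UNIV)"
      by (auto simp: less_bool_def)
  qed
  with R have "relaxed_monomial_order R"
    by (simp add: relaxed_monomial_order_iff)
  then show ?thesis
    by (rule that) (intro key, simp add: less_bool_def)
qed

lemma FA_eq_maximal_gaps:
  "FA S = {F \<in> gaps S. \<forall>h\<in>gaps S. F \<le> h \<longrightarrow> h = F}"
proof (intro set_eqI iffI)
  fix F assume "F \<in> FA S"
  then obtain R where F: "F \<in> gaps S" "relaxed_monomial_order R" "\<forall>h\<in>gaps S. h \<noteq> F \<longrightarrow> R h F"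
    unfolding FA_def by blast
  have "h = F" if "h \<in> gaps S" "F \<le> h" for h
  proof (rule ccontr)
    assume "h \<noteq> F"
    then have "F < h"
      using \<open>F \<le> h\<close> by (simp add: less_le)
    with F(2) have "R F h"
      by (simp add: relaxed_monomial_order_iff)
    moreover have "R h F"
      using F(3) that \<open>h \<noteq> F\<close> by blast
    moreover have "strict_total_order R"
      using F(2) by (simp add: relaxed_monomial_order_iff)
    ultimately show False
      using strict_total_orderD by metis
  qed
  with F show "F \<in> {F \<in> gaps S. \<forall>h\<in>gaps S. F \<le> h \<longrightarrow> h = F}"
    by blast
next
  fix F assume F: "F \<in> {F \<in> gaps S. \<forall>h\<in>gaps S. F \<le> h \<longrightarrow> h = F}"
  obtain R where "relaxed_monomial_order R" "\<And>h. \<not> F \<le> h \<Longrightarrow> R h F"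
    using relaxed_monomial_order_with_top by blast
  with F show "F \<in> FA S"
    unfolding FA_def by blast
qed

lemma GNS_iff:
  "GNS S \<longleftrightarrow> 0 \<in> S \<and> (\<forall>x\<in>S. \<forall>y\<in>S. x + y \<in> S) \<and> finite (gaps S)"
  by (simp add: GNS_def vector_ops_eq)

definition special_gap :: "('d \<Rightarrow> nat) set \<Rightarrow> ('d \<Rightarrow> nat) \<Rightarrow> bool" where
  "special_gap S h \<longleftrightarrow> h \<in> gaps S \<and> (\<forall>s\<in>S. s \<noteq> 0 \<longrightarrow> h + s \<in> S) \<and> h + h \<in> S"

lemma GNS_insert_special_gap:
  assumes "GNS S" and "special_gap S h"
  shows "GNS (insert h S)"
proof -
  have closed: "x + y \<in> S" if "x \<in> S" "y \<in> S" for x y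
    using assms(1) that by (simp add: GNS_iff)
  have shift: "h + s \<in> insert h S" if "s \<in> S" for s
    using assms(2) that by (cases "s = 0") (auto simp: special_gap_def)
  have "x + y \<in> insert h S" if "x \<in> insert h S" "y \<in> insert h S" for x y
    using that closed shift[of x] shift[of y] assms(2) by (auto simp: special_gap_def add.commute)
  moreover have "finite (gaps (insert h S))"
    using assms(1) finite_subset[of "gaps (insert h S)" "gaps S"] by (auto simp: GNS_iff gaps_def)
  ultimately show ?thesis
    using assms(1) by (simp add: GNS_iff)
qed

lemma special_gap_if_FA:
  assumes "GNS S" and "F \<in> FA S"
  shows "special_gap S F"
proof -
  have gap: "F \<in> gaps S" and maximal: "\<And>h. h \<in> gaps S \<Longrightarrow> F \<le> h \<Longrightarrow> h = F"
    using assms(2) by (auto simp: FA_eq_maximal_gaps)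
  have "F + u \<in> S" if "u \<noteq> 0" for u
    using maximal[of "F + u"] le_add_fun[of F u] that by (auto simp: gaps_def)
  moreover have "F \<noteq> 0"
    using assms(1) gap by (auto simp: GNS_iff gaps_def)
  ultimately show ?thesis
    using gap by (simp add: special_gap_def)
qed

lemma FA_above_gap:
  assumes "GNS S" and "x \<in> gaps S"
  obtains F where "F \<in> FA S" and "x \<le> F"
  using finite_has_maximal2[of "gaps S" x] assms by (auto simp: GNS_iff FA_eq_maximal_gaps)

lemma antichain_add_eq_0:
  fixes x y :: "'d \<Rightarrow> nat"
  assumes "antichain D" and "x \<in> D" and "x + y \<in> D"
  shows "y = 0"
  using assms le_add_fun[of x y] unfolding antichain_def by (metis add_cancel_left_right)

definition quasi_irreducible_at :: "('d \<Rightarrow> nat) set \<Rightarrow> ('d \<Rightarrow> nat) set \<Rightarrow> ('d \<Rightarrow> nat) \<Rightarrow> bool" where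
  "quasi_irreducible_at D S x \<longleftrightarrow> x + x \<in> D \<or> (\<exists>s\<in>S. x + s \<in> D)"

lemma quasi_irreducible_iff:
  "quasi_irreducible S \<longleftrightarrow> (\<forall>x\<in>gaps S. quasi_irreducible_at (FA S) S x)"
proof -
  have "(\<exists>F\<in>FA S. x \<le> F \<and> F - x \<in> S) \<longleftrightarrow> (\<exists>s\<in>S. x + s \<in> FA S)" for x :: "'a \<Rightarrow> nat"
    by (metis add_diff_cancel_fun add_diff_cancel_left' le_add_fun)
  then show ?thesis
    by (simp add: quasi_irreducible_def quasi_irreducible_at_def vector_ops_eq)
qed

locale maximal_non_qi_gap =
  fixes S D :: "('d \<Rightarrow> nat) set" and h :: "'d \<Rightarrow> nat"
  assumes zero_mem: "0 \<in> S"
    and add_mem: "\<And>x y. x \<in> S \<Longrightarrow> y \<in> S \<Longrightarrow> x + y \<in> S"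
    and antichain: "antichain D"
    and gap: "h \<notin> S"
    and not_qi: "\<not> quasi_irreducible_at D S h"
    and qi_above: "\<And>y. y \<notin> S \<Longrightarrow> h < y \<Longrightarrow> quasi_irreducible_at D S y"
begin

lemma shift_notin: "s \<in> S \<Longrightarrow> h + s \<notin> D"
  using not_qi by (auto simp: quasi_irreducible_at_def)

lemma double_in_if_shift_gap:
  assumes "s \<in> S" and "s \<noteq> 0" and "h + s \<notin> S"
  shows "(h + s) + (h + s) \<in> D"
proof -
  have "quasi_irreducible_at D S (h + s)"
    using qi_above[OF assms(3)] less_add_fun[OF assms(2)] by blast
  moreover have "(h + s) + t \<notin> D" if "t \<in> S" for t
    using shift_notin[OF add_mem[OF assms(1) that]] by (simp add: add.assoc)
  ultimately show ?thesis
    by (auto simp: quasi_irreducible_at_def)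
qed

lemma shift_mem:
  assumes "s \<in> S" and "s \<noteq> 0"
  shows "h + s \<in> S"
proof (rule ccontr)
  assume "h + s \<notin> S"
  \<comment> \<open>then both \<open>2(h + s)\<close> and \<open>2(h + 2s)\<close> would lie in the antichain \<open>D\<close>\<close>
  then have double: "(h + s) + (h + s) \<in> D"
    by (rule double_in_if_shift_gap[OF assms])
  have "s + s \<in> S" "s + s \<noteq> 0"
    using add_mem[OF assms(1) assms(1)] assms(2) by (auto simp: fun_eq_iff)
  show False
  proof (cases "h + (s + s) \<in> S")
    case True
    have "h + (h + (s + s)) = (h + s) + (h + s)"
      by (simp add: ac_simps)
    with shift_notin[OF True] double show False
      by simp
  next
    case False
    have "(h + (s + s)) + (h + (s + s)) = ((h + s) + (h + s)) + (s + s)"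
      by (simp add: ac_simps)
    with double_in_if_shift_gap[OF \<open>s + s \<in> S\<close> \<open>s + s \<noteq> 0\<close> False]
    have "((h + s) + (h + s)) + (s + s) \<in> D"
      by simp
    then have "s + s = 0"
      by (rule antichain_add_eq_0[OF antichain double])
    with \<open>s + s \<noteq> 0\<close> show False ..
  qed
qed

lemma nonzero: "h \<noteq> 0"
  using gap zero_mem by blast

lemma shift_shift_mem:
  assumes "t \<in> S" and "t \<noteq> 0"
  shows "h + (h + t) \<in> S"
proof -
  have "h + t \<in> S" "h + t \<noteq> 0"
    using shift_mem[OF assms] assms(2) by (auto simp: fun_eq_iff)
  then show ?thesis
    by (rule shift_mem)
qed

lemma quadruple_in_if_double_gap:
  assumes "h + h \<notin> S"
  shows "(h + h) + (h + h) \<in> D"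
proof -
  have "quasi_irreducible_at D S (h + h)"
    using qi_above[OF assms] less_add_fun[OF nonzero] by blast
  moreover have "h + h \<notin> D"
    using not_qi by (simp add: quasi_irreducible_at_def)
  moreover have "(h + h) + t \<notin> D" if "t \<in> S" "t \<noteq> 0" for t
    using shift_notin[OF shift_mem[OF that]] by (simp add: add.assoc)
  ultimately show ?thesis
    unfolding quasi_irreducible_at_def by (metis add.right_neutral)
qed

lemma double_mem: "h + h \<in> S"
proof (rule ccontr)
  assume "h + h \<notin> S"
  \<comment> \<open>then \<open>3h\<close> is a gap above \<open>h\<close> for which the antichain \<open>D\<close> leaves no witness\<close>
  then have quadruple: "(h + h) + (h + h) \<in> D"
    by (rule quadruple_in_if_double_gap)
  have "h + h \<noteq> 0"
    using nonzero by (simp add: add_self_eq_0_fun)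
  have triple_gap: "h + h + h \<notin> S"
  proof
    assume "h + h + h \<in> S"
    moreover have "h + (h + h + h) = (h + h) + (h + h)"
      by (simp add: ac_simps)
    ultimately show False
      using shift_notin quadruple by metis
  qed
  have "quasi_irreducible_at D S (h + h + h)"
    using qi_above[OF triple_gap] less_add_fun[OF \<open>h + h \<noteq> 0\<close>, of h] by (simp add: add.assoc)
  moreover have "(h + h + h) + (h + h + h) \<notin> D"
  proof
    assume "(h + h + h) + (h + h + h) \<in> D"
    moreover have "(h + h + h) + (h + h + h) = ((h + h) + (h + h)) + (h + h)"
      by (simp add: ac_simps)
    ultimately have "((h + h) + (h + h)) + (h + h) \<in> D"
      by simp
    then have "h + h = 0"
      by (rule antichain_add_eq_0[OF antichain quadruple])
    with \<open>h + h \<noteq> 0\<close> show False ..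
  qed
  moreover have "h + h + h \<notin> D"
  proof
    assume triple: "h + h + h \<in> D"
    have "(h + h) + (h + h) = (h + h + h) + h"
      by (simp add: ac_simps)
    with quadruple have "(h + h + h) + h \<in> D"
      by simp
    then have "h = 0"
      by (rule antichain_add_eq_0[OF antichain triple])
    with nonzero show False ..
  qed
  moreover have "(h + h + h) + t \<notin> D" if "t \<in> S" "t \<noteq> 0" for t
    using shift_notin[OF shift_shift_mem[OF that]] by (simp add: add.assoc)
  ultimately show False
    unfolding quasi_irreducible_at_def by (metis add.right_neutral)
qed

lemma is_special_gap: "special_gap S h"
  using gap shift_mem double_mem by (simp add: special_gap_def gaps_def)

end

lemma special_gap_mem_if_maximal_in_CD:
  assumes "maximal_in S (CD D)" and "special_gap S h"
  shows "h \<in> D"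
proof (rule ccontr)
  assume "h \<notin> D"
  from assms(1) have "GNS S" "D \<subseteq> gaps S" and maximal: "\<And>T. T \<in> CD D \<Longrightarrow> S \<subseteq> T \<Longrightarrow> T = S"
    by (auto simp: maximal_in_def CD_def)
  with \<open>h \<notin> D\<close> have "insert h S \<in> CD D"
    using GNS_insert_special_gap[OF _ assms(2)] by (auto simp: CD_def gaps_def)
  with maximal have "insert h S = S"
    by blast
  with assms(2) show False
    by (auto simp: special_gap_def gaps_def)
qed

lemma FA_eq_if_maximal_in_CD:
  assumes "antichain D" and "maximal_in S (CD D)"
  shows "FA S = D"
proof -
  from assms(2) have S: "GNS S" and D_gaps: "D \<subseteq> gaps S"
    by (auto simp: maximal_in_def CD_def)
  have FA_sub: "FA S \<subseteq> D"
    using special_gap_if_FA[OF S] special_gap_mem_if_maximal_in_CD[OF assms(2)] by blast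
  moreover have "d \<in> FA S" if "d \<in> D" for d
  proof -
    obtain F where "F \<in> FA S" "d \<le> F"
      using FA_above_gap[OF S] D_gaps \<open>d \<in> D\<close> by blast
    with FA_sub assms(1) \<open>d \<in> D\<close> show ?thesis
      unfolding antichain_def by blast
  qed
  ultimately show ?thesis
    by blast
qed

lemma quasi_irreducible_if_maximal_in_CD:
  assumes "antichain D" and "maximal_in S (CD D)"
  shows "quasi_irreducible S"
proof -
  from assms(2) have S: "GNS S"
    by (simp add: maximal_in_def CD_def)
  then have zero_mem: "0 \<in> S" and add_mem: "\<And>x y. x \<in> S \<Longrightarrow> y \<in> S \<Longrightarrow> x + y \<in> S"
    and finite_gaps: "finite (gaps S)"
    by (auto simp: GNS_iff)
  have "quasi_irreducible_at D S x" if "x \<in> gaps S" for x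
  proof (rule ccontr)
    define B where "B = {y \<in> gaps S. \<not> quasi_irreducible_at D S y}"
    assume "\<not> quasi_irreducible_at D S x"
    with that have "finite B" "B \<noteq> {}"
      using finite_gaps by (auto simp: B_def)
    then obtain h where "h \<in> B" and maximal: "\<forall>y\<in>B. h \<le> y \<longrightarrow> h = y"
      using finite_has_maximal by blast
    then have h: "h \<in> gaps S" "\<not> quasi_irreducible_at D S h"
      by (simp_all add: B_def)
    have "maximal_non_qi_gap S D h"
    proof
      show "h \<notin> S" "\<not> quasi_irreducible_at D S h"
        using h by (auto simp: gaps_def)
      show "quasi_irreducible_at D S y" if "y \<notin> S" "h < y" for y
        using maximal that by (auto simp: B_def gaps_def)
    qed (use zero_mem add_mem assms(1) in auto)
    then have "special_gap S h"
      by (rule maximal_non_qi_gap.is_special_gap)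
    then have "h + 0 \<in> D"
      using special_gap_mem_if_maximal_in_CD[OF assms(2)] by simp
    with h(2) zero_mem show False
      unfolding quasi_irreducible_at_def by blast
  qed
  then show ?thesis
    using FA_eq_if_maximal_in_CD[OF assms] by (simp add: quasi_irreducible_iff)
qed

lemma maximal_in_CD_if_quasi_irreducible:
  assumes "GNS S" and "quasi_irreducible S"
  shows "maximal_in S (CD (FA S))"
  unfolding maximal_in_def
proof (intro conjI ballI impI)
  show "S \<in> CD (FA S)"
    using assms(1) by (auto simp: CD_def FA_def)
  fix T assume T: "T \<in> CD (FA S)" "S \<subseteq> T"
  then have add_mem: "\<And>x y. x \<in> T \<Longrightarrow> y \<in> T \<Longrightarrow> x + y \<in> T" and FA_gaps: "FA S \<subseteq> gaps T"
    by (auto simp: CD_def GNS_iff)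
  show "T = S"
  proof (rule ccontr)
    assume "T \<noteq> S"
    with T(2) obtain x where "x \<in> T" "x \<in> gaps S"
      by (auto simp: gaps_def)
    with assms(2) have "quasi_irreducible_at (FA S) S x"
      by (simp add: quasi_irreducible_iff)
    with \<open>x \<in> T\<close> T(2) add_mem FA_gaps show False
      unfolding quasi_irreducible_at_def gaps_def by blast
  qed
qed

theorem theorem3p2:
  fixes D :: "('d::finite \<Rightarrow> nat) set"
  assumes "finite D" and "vzero \<notin> D" and "antichain D"
  shows "\<forall>S. maximal_in S (CD D) \<longleftrightarrow> (GNS S \<and> quasi_irreducible S \<and> FA S = D)"
proof (intro allI iffI)
  fix S assume maximal: "maximal_in S (CD D)"
  then have "GNS S"
    by (simp add: maximal_in_def CD_def)
  with quasi_irreducible_if_maximal_in_CD[OF assms(3) maximal] FA_eq_if_maximal_in_CD[OF assms(3) maximal]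
  show "GNS S \<and> quasi_irreducible S \<and> FA S = D"
    by blast
next
  fix S assume "GNS S \<and> quasi_irreducible S \<and> FA S = D"
  then show "maximal_in S (CD D)"
    using maximal_in_CD_if_quasi_irreducible by blast
qed

end
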